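(* For integers $d \ge 1$ and $n \ge 0$, $$\mathcal{I}_{d,n} = n^{\underline{d}} \int_{[0,1)^d} \Big[\prod_{j=1}^d (1-x_j)\Big]^{d-1} \Big[1 - \prod_{j=1}^d (1-x_j)\Big]^{n-d} \, dx_1\cdots dx_d,$$ where $n^{\underline{d}} = n(n-1)\cdots(n-d+1)$.
   Context: Let $X^{(1)}, X^{(2)}, \dots$ be i.i.d. random vectors uniformly distributed on $[0,1)^d$. For $x,y\in\mathbb{R}^d$, $x \prec y$ means $x_j<y_j$ for all $j$ and $x \le y$ means $x_j \le y_j$ for all $j$. After $n$ observations, the record-setting region is $S_n := \{x \in [0,1)^d : x \not\prec X^{(i)} \text{ for all } i \in [n]\}$; its generators are the minimal elements of $S_n$ with respect to $\le$; a generator is interior if all its coordinates are nonzero. $\mathcal{I}_{d,n}$ is the expected number of interior generators of $S_n$. (When $n<d$, $n^{\underline d}=0$.) *)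

theory Defs
  imports "HOL-Probability.Probability"
begin

text \<open>Points of [0,1)^d are represented as extensional functions on the index
set {..<d} (as in PiE / PiM).  The n observations form a function
X :: nat => (nat => real), observation i (for i < n) being X i.\<close>

definition unit_cube :: "nat \<Rightarrow> (nat \<Rightarrow> real) set" where
  "unit_cube d = PiE {..<d} (\<lambda>_. {0..<1})"

definition strict_dom :: "nat \<Rightarrow> (nat \<Rightarrow> real) \<Rightarrow> (nat \<Rightarrow> real) \<Rightarrow> bool" where
  "strict_dom d x y \<longleftrightarrow> (\<forall>j<d. x j < y j)"

definition weak_dom :: "nat \<Rightarrow> (nat \<Rightarrow> real) \<Rightarrow> (nat \<Rightarrow> real) \<Rightarrow> bool" where
  "weak_dom d x y \<longleftrightarrow> (\<forall>j<d. x j \<le> y j)"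

definition record_region :: "nat \<Rightarrow> nat \<Rightarrow> (nat \<Rightarrow> nat \<Rightarrow> real) \<Rightarrow> (nat \<Rightarrow> real) set" where
  "record_region d n X = {x \<in> unit_cube d. \<forall>i<n. \<not> strict_dom d x (X i)}"

definition generators :: "nat \<Rightarrow> nat \<Rightarrow> (nat \<Rightarrow> nat \<Rightarrow> real) \<Rightarrow> (nat \<Rightarrow> real) set" where
  "generators d n X = {x \<in> record_region d n X.
      \<forall>y \<in> record_region d n X. weak_dom d y x \<longrightarrow> y = x}"

definition interior_generators :: "nat \<Rightarrow> nat \<Rightarrow> (nat \<Rightarrow> nat \<Rightarrow> real) \<Rightarrow> (nat \<Rightarrow> real) set" where
  "interior_generators d n X = {x \<in> generators d n X. \<forall>j<d. x j \<noteq> 0}"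

definition obs_measure :: "nat \<Rightarrow> nat \<Rightarrow> (nat \<Rightarrow> nat \<Rightarrow> real) measure" where
  "obs_measure d n = PiM {..<n} (\<lambda>_. PiM {..<d} (\<lambda>_. uniform_measure lborel {0..<1::real}))"

definition I_dn :: "nat \<Rightarrow> nat \<Rightarrow> ennreal" where
  "I_dn d n = (\<integral>\<^sup>+ X. of_nat (card (interior_generators d n X)) \<partial>obs_measure d n)"

text \<open>Falling factorial n(n-1)...(n-d+1); equals 0 when n < d.\<close>
definition falling :: "nat \<Rightarrow> nat \<Rightarrow> nat" where
  "falling n d = (\<Prod>i<d. n - i)"

end

theory Submission
  imports Defs
begin

text \<open>
  Almost surely the observations have nonzero coordinates and no two of them share a value in
  any coordinate.  Then every interior generator x is pinned down by an injection s from the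
  coordinates into the observations: x_j is the j-th coordinate of observation s(j), and that
  observation exceeds x strictly in every other coordinate.  Conversely, the "diagonal point"
  built in this way from an injection s is an interior generator whenever each s(j) exceeds it
  off coordinate j and no observation strictly dominates it.  So I_{d,n} is a sum of
  n(n-1)...(n-d+1) equal probabilities.  Given the diagonal point x, the d(d-1) off-diagonal
  entries of the chosen observations exceed the corresponding coordinates of x with probability
  (prod_k (1 - x_k))^(d-1), and each of the n - d remaining observations fails to dominate x with
  probability 1 - prod_k (1 - x_k).
\<close>

section \<open>Product measures\<close>

lemma product_sigma_finite_prob_space:
  assumes "prob_space N"
  shows "product_sigma_finite (\<lambda>_::'i. N)"
proof -
  interpret prob_space N by fact
  show ?thesis by unfold_locales
qed

text \<open>Unlike \<open>measurable_component_singleton\<close>, this needs no \<open>k \<in> J\<close>: outside \<open>J\<close> the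
  component is constantly \<open>undefined\<close> on the product space.\<close>
lemma borel_measurable_PiM_component:
  fixes M :: "real measure"
  assumes "sets M = sets borel"
  shows "(\<lambda>y. y k) \<in> borel_measurable (PiM J (\<lambda>_. M))"
proof (cases "k \<in> J")
  case True
  then have "(\<lambda>y. y k) \<in> measurable (PiM J (\<lambda>_. M)) M"
    by (rule measurable_component_singleton)
  also have "measurable (PiM J (\<lambda>_. M)) M = borel_measurable (PiM J (\<lambda>_. M))"
    by (rule measurable_cong_sets) (auto simp: assms)
  finally show ?thesis .
next
  case False
  have "(\<lambda>y. undefined :: real) \<in> borel_measurable (PiM J (\<lambda>_. M))"
    by (rule borel_measurable_const)
  moreover have "y k = undefined" if "y \<in> space (PiM J (\<lambda>_. M))" for y
    using that False by (metis PiE_arb space_PiM)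
  ultimately show ?thesis
    using measurable_cong[of "PiM J (\<lambda>_. M)" "\<lambda>y. y k" "\<lambda>y. undefined" borel] by blast
qed

lemma borel_measurable_PiM_PiM_component:
  fixes M :: "real measure" and k :: 'k
  assumes "sets M = sets borel"
  shows "(\<lambda>W. W j k) \<in> borel_measurable (PiM I (\<lambda>_. PiM J (\<lambda>_. M)))"
proof (cases "j \<in> I")
  case True
  then have "(\<lambda>W. W j) \<in> measurable (PiM I (\<lambda>_. PiM J (\<lambda>_. M))) (PiM J (\<lambda>_. M))"
    by (rule measurable_component_singleton)
  then show ?thesis
    using borel_measurable_PiM_component[OF assms] by (rule measurable_compose)
next
  case False
  have "(\<lambda>W. (undefined :: 'k \<Rightarrow> real) k) \<in> borel_measurable (PiM I (\<lambda>_. PiM J (\<lambda>_. M)))"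
    by (rule borel_measurable_const)
  moreover have "W j k = undefined k" if "W \<in> space (PiM I (\<lambda>_. PiM J (\<lambda>_. M)))" for W
    using that False by (metis PiE_arb space_PiM)
  ultimately show ?thesis
    using measurable_cong[of "PiM I (\<lambda>_. PiM J (\<lambda>_. M))" "\<lambda>W. W j k" "\<lambda>W. undefined k" borel]
    by blast
qed

lemma measurable_PiM_PiM_component:
  assumes "j \<in> I" "k \<in> J"
  shows "(\<lambda>W. W j k) \<in> measurable (PiM I (\<lambda>_. PiM J (\<lambda>_. N))) N"
proof -
  have "(\<lambda>W. W j) \<in> measurable (PiM I (\<lambda>_. PiM J (\<lambda>_. N))) (PiM J (\<lambda>_. N))"
    using assms(1) by (rule measurable_component_singleton)
  moreover have "(\<lambda>y. y k) \<in> measurable (PiM J (\<lambda>_. N)) N"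
    using assms(2) by (rule measurable_component_singleton)
  ultimately show ?thesis
    by (rule measurable_compose)
qed

lemma pred_borel_le:
  "f \<in> borel_measurable M \<Longrightarrow> g \<in> borel_measurable M \<Longrightarrow> Measurable.pred M (\<lambda>x. (f x :: real) \<le> g x)"
  unfolding Measurable.pred_def by (rule borel_measurable_le)

lemma borel_measurable_prod_complement_power:
  fixes M :: "real measure"
  assumes "sets M = sets borel"
  shows "(\<lambda>x. (\<Prod>k<d. ennreal (1 - x k)) ^ m) \<in> borel_measurable (PiM J (\<lambda>_. M))"
  by (intro borel_measurable_power_ennreal borel_measurable_prod_ennreal
      measurable_compose[OF _ measurable_ennreal] borel_measurable_diff borel_measurable_const
      borel_measurable_PiM_component[OF assms])

lemma measurable_PiM_uncurry:
  "(\<lambda>X. \<lambda>p\<in>I \<times> J. X (fst p) (snd p))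
     \<in> measurable (PiM I (\<lambda>_. PiM J (\<lambda>_. N))) (PiM (I \<times> J) (\<lambda>_. N))"
  by (intro measurable_restrict measurable_PiM_PiM_component) auto

lemma distr_PiM_uncurry:
  fixes N :: "'c measure" and I :: "'a set" and J :: "'b set"
  assumes N: "prob_space N" and I: "finite I" and J: "finite J"
  shows "distr (PiM I (\<lambda>_. PiM J (\<lambda>_. N))) (PiM (I \<times> J) (\<lambda>_. N)) (\<lambda>X. \<lambda>p\<in>I \<times> J. X (fst p) (snd p))
     = PiM (I \<times> J) (\<lambda>_. N)"
proof -
  interpret pair: product_sigma_finite "\<lambda>_::'a \<times> 'b. N"
    by (rule product_sigma_finite_prob_space[OF N])
  interpret row: product_sigma_finite "\<lambda>_::'b. N"
    by (rule product_sigma_finite_prob_space[OF N])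
  interpret product_sigma_finite "\<lambda>_::'a. PiM J (\<lambda>_. N)"
    by (intro product_sigma_finite_prob_space prob_space_PiM N)
  have finite: "finite (I \<times> J)"
    using I J by simp
  show ?thesis
  proof (rule pair.PiM_eqI[OF finite])
    fix A assume A: "\<And>p. p \<in> I \<times> J \<Longrightarrow> A p \<in> sets N"
    have "(\<lambda>X. \<lambda>p\<in>I \<times> J. X (fst p) (snd p)) -` PiE (I \<times> J) A \<inter> space (PiM I (\<lambda>_. PiM J (\<lambda>_. N)))
        = PiE I (\<lambda>i. PiE J (\<lambda>j. A (i, j)))"
      using A sets.sets_into_space by (auto simp: space_PiM PiE_iff extensional_def) blast+
    moreover have "emeasure (PiM I (\<lambda>_. PiM J (\<lambda>_. N))) (PiE I (\<lambda>i. PiE J (\<lambda>j. A (i, j))))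
        = (\<Prod>i\<in>I. emeasure (PiM J (\<lambda>_. N)) (PiE J (\<lambda>j. A (i, j))))"
      using I J A by (intro emeasure_PiM) (auto intro!: sets_PiM_I_finite)
    moreover have "\<dots> = (\<Prod>i\<in>I. \<Prod>j\<in>J. emeasure N (A (i, j)))"
      using J A by (intro prod.cong refl row.emeasure_PiM) auto
    ultimately show "emeasure (distr (PiM I (\<lambda>_. PiM J (\<lambda>_. N))) (PiM (I \<times> J) (\<lambda>_. N))
          (\<lambda>X. \<lambda>p\<in>I \<times> J. X (fst p) (snd p))) (PiE (I \<times> J) A) = (\<Prod>p\<in>I \<times> J. emeasure N (A p))"
      using A I J
      by (subst emeasure_distr[OF measurable_PiM_uncurry])
        (auto simp: prod.cartesian_product intro!: sets_PiM_I_finite)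
  qed simp
qed

lemma nn_integral_PiM_uncurry:
  assumes N: "prob_space N" and I: "finite I" and J: "finite J"
    and f: "f \<in> borel_measurable (PiM (I \<times> J) (\<lambda>_. N))"
  shows "(\<integral>\<^sup>+ W. f (\<lambda>p\<in>I \<times> J. W (fst p) (snd p)) \<partial>PiM I (\<lambda>_. PiM J (\<lambda>_. N)))
       = integral\<^sup>N (PiM (I \<times> J) (\<lambda>_. N)) f"
proof -
  have "(\<integral>\<^sup>+ W. f (\<lambda>p\<in>I \<times> J. W (fst p) (snd p)) \<partial>PiM I (\<lambda>_. PiM J (\<lambda>_. N)))
      = integral\<^sup>N (distr (PiM I (\<lambda>_. PiM J (\<lambda>_. N))) (PiM (I \<times> J) (\<lambda>_. N))
          (\<lambda>W. \<lambda>p\<in>I \<times> J. W (fst p) (snd p))) f"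
    by (rule nn_integral_distr[OF measurable_PiM_uncurry, symmetric]) (simp add: f)
  then show ?thesis
    by (simp only: distr_PiM_uncurry[OF N I J])
qed

lemma nn_integral_PiM_reindex:
  assumes N: "prob_space N" and f: "inj_on f I" "f \<in> I \<rightarrow> K"
    and g: "g \<in> borel_measurable (PiM I (\<lambda>_. N))"
  shows "integral\<^sup>N (PiM I (\<lambda>_. N)) g = (\<integral>\<^sup>+ \<omega>. g (\<lambda>i\<in>I. \<omega> (f i)) \<partial>PiM K (\<lambda>_. N))"
proof -
  have "(\<lambda>\<omega>. \<lambda>i\<in>I. \<omega> (f i)) \<in> measurable (PiM K (\<lambda>_. N)) (PiM I (\<lambda>_. N))"
    using f by (intro measurable_restrict) (auto intro!: measurable_component_singleton)
  moreover have "distr (PiM K (\<lambda>_. N)) (PiM I (\<lambda>_. N)) (\<lambda>\<omega>. \<lambda>i\<in>I. \<omega> (f i)) = PiM I (\<lambda>_. N)"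
    using distr_PiM_reindex[of K "\<lambda>_. N" f I] N f by simp
  ultimately show ?thesis
    using g by (metis nn_integral_distr)
qed

lemma (in product_sigma_finite) nn_integral_PiM_all_in:
  assumes "finite R" "\<And>p. p \<in> R \<Longrightarrow> A p \<in> sets (M p)"
  shows "(\<integral>\<^sup>+ v. (if \<forall>p\<in>R. v p \<in> A p then c else 0) \<partial>PiM R M) = c * (\<Prod>p\<in>R. emeasure (M p) (A p))"
proof -
  have "(\<integral>\<^sup>+ v. (if \<forall>p\<in>R. v p \<in> A p then c else 0) \<partial>PiM R M) = (\<integral>\<^sup>+ v. c * indicator (PiE R A) v \<partial>PiM R M)"
    by (intro nn_integral_cong) (auto simp: space_PiM PiE_iff indicator_def)
  also have "\<dots> = c * emeasure (PiM R M) (PiE R A)"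
    using assms by (intro nn_integral_cmult_indicator sets_PiM_I_finite) auto
  finally show ?thesis
    using assms by (simp add: emeasure_PiM)
qed

lemma AE_PiM_components_neq:
  fixes f :: "'a \<Rightarrow> real" and I :: "'i set"
  assumes N: "prob_space N" and I: "finite I" "i \<in> I" "i' \<in> I" "i \<noteq> i'"
    and f: "f \<in> borel_measurable N" and no_atoms: "\<And>c. AE y in N. f y \<noteq> c"
  shows "AE X in PiM I (\<lambda>_. N). f (X i) \<noteq> f (X i')"
proof -
  interpret product_sigma_finite "\<lambda>_::'i. N"
    by (rule product_sigma_finite_prob_space[OF N])
  define tie where "tie X = (if f (X i) = f (X i') then 1 else 0 :: ennreal)" for X :: "'i \<Rightarrow> 'a"
  have component: "(\<lambda>X. f (X k)) \<in> borel_measurable (PiM I (\<lambda>_. N))" if "k \<in> I" for k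
    using measurable_component_singleton[OF that] f by (rule measurable_compose)
  have tie_meas: "tie \<in> borel_measurable (PiM I (\<lambda>_. N))"
    unfolding tie_def using I
    by (intro measurable_If[OF _ _ predE] borel_measurable_const)
      (auto simp: pred_def intro!: borel_measurable_eq component)
  have "integral\<^sup>N (PiM I (\<lambda>_. N)) tie = integral\<^sup>N (PiM (insert i (I - {i})) (\<lambda>_. N)) tie"
    using I by (simp add: insert_absorb)
  also have "\<dots> = (\<integral>\<^sup>+ x. (\<integral>\<^sup>+ y. tie (x(i := y)) \<partial>N) \<partial>PiM (I - {i}) (\<lambda>_. N))"
    using I tie_meas by (intro product_nn_integral_insert) (auto simp: insert_absorb)
  also have "\<dots> = (\<integral>\<^sup>+ x. 0 \<partial>PiM (I - {i}) (\<lambda>_. N))"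
  proof (intro nn_integral_cong)
    fix x :: "'i \<Rightarrow> 'a"
    have "AE y in N. tie (x(i := y)) = 0"
      using no_atoms[of "f (x i')"] I by (auto elim!: eventually_mono simp: tie_def)
    then show "(\<integral>\<^sup>+ y. tie (x(i := y)) \<partial>N) = 0"
      by (simp add: nn_integral_0_iff_AE[symmetric] nn_integral_cong_AE)
  qed
  finally have "AE X in PiM I (\<lambda>_. N). tie X = 0"
    using tie_meas by (simp add: nn_integral_0_iff_AE)
  then show ?thesis
    by (auto elim!: eventually_mono simp: tie_def split: if_splits)
qed

section \<open>The uniform distribution on the unit cube\<close>

abbreviation uniform01 :: "real measure" where
  "uniform01 \<equiv> uniform_measure lborel {0..<1}"

lemma prob_space_uniform01: "prob_space uniform01"
  by (rule prob_space_uniform_measure) auto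

lemma sets_uniform01: "sets uniform01 = sets borel"
  by simp

lemma prob_space_PiM_uniform01: "prob_space (PiM I (\<lambda>_. uniform01))"
  by (intro prob_space_PiM prob_space_uniform01)

lemma emeasure_uniform01_greaterThan:
  assumes "0 \<le> c" "c < 1"
  shows "emeasure uniform01 {c<..} = ennreal (1 - c)"
proof -
  have "{0..<1} \<inter> {c<..} = {c<..<1::real}"
    using assms by auto
  then show ?thesis
    using assms by (simp add: emeasure_uniform_measure divide_ennreal_def)
qed

lemma AE_uniform01_neq: "AE t in uniform01. t \<noteq> c"
  by (subst AE_uniform_measure) (auto intro: eventually_mono[OF AE_lborel_singleton[of c]])

lemma PiM_uniform01_eq_density:
  assumes K: "finite K"
  shows "PiM K (\<lambda>_. uniform01) = density (PiM K (\<lambda>_. lborel)) (indicator (PiE K (\<lambda>_. {0..<1})))"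
proof -
  interpret product_sigma_finite "\<lambda>_::'a. uniform01"
    by (rule product_sigma_finite_prob_space[OF prob_space_uniform01])
  interpret lebesgue: product_sigma_finite "\<lambda>_::'a. lborel::real measure"
    by unfold_locales
  have cube: "PiE K (\<lambda>_. {0..<1::real}) \<in> sets (PiM K (\<lambda>_. lborel))"
    using K by (intro sets_PiM_I_finite) auto
  show ?thesis
  proof (rule PiM_eqI[symmetric, OF K])
    show "sets (density (PiM K (\<lambda>_. lborel)) (indicator (PiE K (\<lambda>_. {0..<1})))) = sets (PiM K (\<lambda>_. uniform01))"
      by (simp cong: sets_PiM_cong)
    fix A assume A: "\<And>k. k \<in> K \<Longrightarrow> A k \<in> sets uniform01"
    have box: "PiE K A \<in> sets (PiM K (\<lambda>_. lborel))"
      using K A by (intro sets_PiM_I_finite) auto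
    have "emeasure (density (PiM K (\<lambda>_. lborel)) (indicator (PiE K (\<lambda>_. {0..<1})))) (PiE K A)
        = emeasure (PiM K (\<lambda>_. lborel)) (PiE K (\<lambda>_. {0..<1}) \<inter> PiE K A)"
      using cube box
      by (simp add: emeasure_density nn_integral_indicator[symmetric] indicator_inter_arith[symmetric]
          nn_integral_density del: nn_integral_indicator)
    also have "PiE K (\<lambda>_. {0..<1}) \<inter> PiE K A = PiE K (\<lambda>k. {0..<1} \<inter> A k)"
      by (auto simp: PiE_iff)
    also have "emeasure (PiM K (\<lambda>_. lborel)) \<dots> = (\<Prod>k\<in>K. emeasure lborel ({0..<1} \<inter> A k))"
      using K A by (intro lebesgue.emeasure_PiM) auto
    also have "\<dots> = (\<Prod>k\<in>K. emeasure uniform01 (A k))"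
      using A by (intro prod.cong refl) (simp add: emeasure_uniform_measure divide_ennreal_def)
    finally show "emeasure (density (PiM K (\<lambda>_. lborel)) (indicator (PiE K (\<lambda>_. {0..<1})))) (PiE K A)
        = (\<Prod>k\<in>K. emeasure uniform01 (A k))" .
  qed
qed

lemma nn_integral_PiM_uniform01:
  assumes K: "finite K" and g: "g \<in> borel_measurable (PiM K (\<lambda>_. lborel::real measure))"
  shows "integral\<^sup>N (PiM K (\<lambda>_. uniform01)) g = (\<integral>\<^sup>+ x \<in> PiE K (\<lambda>_. {0..<1}). g x \<partial>PiM K (\<lambda>_. lborel))"
proof -
  have "PiE K (\<lambda>_. {0..<1::real}) \<in> sets (PiM K (\<lambda>_. lborel))"
    using K by (intro sets_PiM_I_finite) auto
  then show ?thesis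
    unfolding PiM_uniform01_eq_density[OF K] using g
    by (subst nn_integral_density) (auto simp: mult.commute intro: borel_measurable_indicator)
qed

lemma emeasure_PiM_uniform01_undominated:
  fixes d :: nat
  assumes c: "\<And>k. k < d \<Longrightarrow> 0 \<le> c k \<and> c k < 1"
  shows "emeasure (PiM {..<d} (\<lambda>_. uniform01)) {y \<in> space (PiM {..<d} (\<lambda>_. uniform01)). \<not> (\<forall>k<d. c k < y k)}
       = ennreal (1 - (\<Prod>k<d. 1 - c k))"
proof -
  let ?M = "PiM {..<d} (\<lambda>_. uniform01)"
  interpret prob_space ?M
    by (rule prob_space_PiM_uniform01)
  interpret product: product_sigma_finite "\<lambda>_::nat. uniform01"
    by (rule product_sigma_finite_prob_space[OF prob_space_uniform01])
  have nonneg: "\<And>k. k \<in> {..<d} \<Longrightarrow> 0 \<le> 1 - c k"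
    using c by fastforce
  have orthant: "{y \<in> space ?M. \<forall>k<d. c k < y k} = PiE {..<d} (\<lambda>k. {c k<..})"
    by (auto simp: space_PiM PiE_iff extensional_def)
  have "emeasure ?M (PiE {..<d} (\<lambda>k. {c k<..})) = (\<Prod>k<d. emeasure uniform01 {c k<..})"
    using product.emeasure_PiM[of "{..<d}" "\<lambda>k. {c k<..}"] by simp
  also have "\<dots> = (\<Prod>k<d. ennreal (1 - c k))"
    using c by (intro prod.cong refl emeasure_uniform01_greaterThan) auto
  also have "\<dots> = ennreal (\<Prod>k<d. 1 - c k)"
    using nonneg by (rule prod_ennreal)
  finally have "emeasure ?M (space ?M - {y \<in> space ?M. \<forall>k<d. c k < y k})
      = 1 - ennreal (\<Prod>k<d. 1 - c k)"
    unfolding orthant by (subst emeasure_compl) (auto simp: emeasure_space_1 intro!: sets_PiM_I_finite)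
  moreover have "space ?M - {y \<in> space ?M. \<forall>k<d. c k < y k} = {y \<in> space ?M. \<not> (\<forall>k<d. c k < y k)}"
    by auto
  moreover have "1 - ennreal (\<Prod>k<d. 1 - c k) = ennreal (1 - (\<Prod>k<d. 1 - c k))"
    using nonneg by (subst ennreal_1[symmetric], subst ennreal_minus) (auto intro: prod_nonneg)
  ultimately show ?thesis
    by simp
qed

lemma nn_integral_PiM_none_dominates:
  fixes B :: "'i set" and d :: nat
  assumes B: "finite B" and c: "\<And>k. k < d \<Longrightarrow> 0 \<le> c k \<and> c k < 1"
  shows "(\<integral>\<^sup>+ b. (if \<forall>i\<in>B. \<not> (\<forall>k<d. c k < b i k) then 1 else 0) \<partial>PiM B (\<lambda>_. PiM {..<d} (\<lambda>_. uniform01)))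
       = ennreal (1 - (\<Prod>k<d. 1 - c k)) ^ card B"
proof -
  let ?Md = "PiM {..<d} (\<lambda>_. uniform01)"
  interpret product_sigma_finite "\<lambda>_::'i. ?Md"
    by (rule product_sigma_finite_prob_space[OF prob_space_PiM_uniform01])
  define S where "S = {y \<in> space ?Md. \<not> (\<forall>k<d. c k < y k)}"
  have S_sets: "S \<in> sets ?Md"
    unfolding S_def
    by (rule predE; intro pred_intros_logic pred_intros_countable pred_intros_imp' borel_measurable_pred_less
        borel_measurable_PiM_component[OF sets_uniform01] borel_measurable_const)
  have "(\<integral>\<^sup>+ b. (if \<forall>i\<in>B. \<not> (\<forall>k<d. c k < b i k) then 1 else 0) \<partial>PiM B (\<lambda>_. ?Md))
      = (\<integral>\<^sup>+ b. (if \<forall>i\<in>B. b i \<in> S then 1 else 0) \<partial>PiM B (\<lambda>_. ?Md))"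
    by (intro nn_integral_cong) (auto simp: S_def space_PiM PiE_iff)
  also have "\<dots> = emeasure ?Md S ^ card B"
    using B S_sets by (simp add: nn_integral_PiM_all_in)
  finally show ?thesis
    by (simp only: S_def emeasure_PiM_uniform01_undominated[OF c])
qed

section \<open>Interior generators as diagonal points\<close>

definition injections :: "nat \<Rightarrow> nat \<Rightarrow> (nat \<Rightarrow> nat) set" where
  "injections d n = {\<sigma> \<in> {..<d} \<rightarrow>\<^sub>E {..<n}. inj_on \<sigma> {..<d}}"

definition diagonal_point :: "nat \<Rightarrow> (nat \<Rightarrow> nat) \<Rightarrow> (nat \<Rightarrow> nat \<Rightarrow> real) \<Rightarrow> nat \<Rightarrow> real" where
  "diagonal_point d \<sigma> X = (\<lambda>j\<in>{..<d}. X (\<sigma> j) j)"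

text \<open>Observation \<open>\<sigma> j\<close> fixes coordinate \<open>j\<close> of the diagonal point: it is strictly larger in
  every other coordinate.\<close>
definition supports_generator :: "nat \<Rightarrow> nat \<Rightarrow> (nat \<Rightarrow> nat) \<Rightarrow> (nat \<Rightarrow> nat \<Rightarrow> real) \<Rightarrow> bool" where
  "supports_generator d n \<sigma> X \<longleftrightarrow>
     (\<forall>j<d. 0 \<le> X (\<sigma> j) j \<and> X (\<sigma> j) j < 1) \<and>
     (\<forall>j<d. \<forall>k<d. k \<noteq> j \<longrightarrow> X (\<sigma> k) k < X (\<sigma> j) k) \<and>
     (\<forall>i<n. \<not> (\<forall>k<d. X (\<sigma> k) k < X i k))"

lemma finite_injections: "finite (injections d n)"
  unfolding injections_def
  by (rule finite_subset[of _ "{..<d} \<rightarrow>\<^sub>E {..<n}"]) (auto intro: finite_PiE)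

lemma card_injections: "card (injections d n) = falling n d"
  unfolding injections_def falling_def
  by (subst card_inj_on_subset_funcset) (auto simp: atLeast0LessThan)

text \<open>Otherwise coordinate \<open>j\<close> of the generator could be lowered to the largest value below it
  that some observation, exceeding \<open>x\<close> elsewhere, attains there.\<close>
lemma generator_coordinate_attained:
  assumes x: "x \<in> generators d n X" and j: "j < d" and xj: "x j \<noteq> 0"
  shows "\<exists>i<n. x j = X i j \<and> (\<forall>k<d. k \<noteq> j \<longrightarrow> x k < X i k)"
proof (rule ccontr)
  assume not_attained: "\<not> ?thesis"
  have x_region: "x \<in> record_region d n X"
    using x by (simp add: generators_def)
  have x_cube: "x \<in> unit_cube d"
    using x_region by (simp add: record_region_def)
  have x_bounds: "0 \<le> x k \<and> x k < 1" if "k < d" for k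
    using x_cube that by (auto simp: unit_cube_def PiE_iff)
  define T where "T = {X i j | i. i < n \<and> X i j < x j \<and> (\<forall>k<d. k \<noteq> j \<longrightarrow> x k < X i k)}"
  define c where "c = Max (insert 0 T)"
  have "finite T"
    unfolding T_def by simp
  then have c_nonneg: "0 \<le> c" and c_less: "c < x j" and c_upper: "\<And>t. t \<in> T \<Longrightarrow> t \<le> c"
    using x_bounds[OF j] xj by (auto simp: c_def T_def)
  define y where "y = x(j := c)"
  have "c < 1"
    using c_less x_bounds[OF j] by linarith
  then have y_cube: "y \<in> unit_cube d"
    using x_cube j c_nonneg by (auto simp: y_def unit_cube_def PiE_iff extensional_def)
  have "\<not> strict_dom d y (X i)" if i: "i < n" for i
  proof
    assume dom: "strict_dom d y (X i)"
    have off: "\<forall>k<d. k \<noteq> j \<longrightarrow> x k < X i k"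
      using dom by (auto simp: strict_dom_def y_def)
    have "c < X i j"
      using dom j by (auto simp: strict_dom_def y_def)
    moreover have "\<not> strict_dom d x (X i)"
      using x_region i by (simp add: record_region_def)
    then have "X i j \<le> x j"
      using off by (auto simp: strict_dom_def not_less)
    moreover have "X i j \<noteq> x j"
      using not_attained i off by force
    ultimately have "X i j \<in> T"
      using i off by (auto simp: T_def)
    with c_upper \<open>c < X i j\<close> show False
      by fastforce
  qed
  then have "y \<in> record_region d n X"
    using y_cube by (simp add: record_region_def)
  moreover have "weak_dom d y x"
    using c_less by (auto simp: weak_dom_def y_def)
  ultimately have "y = x"
    using x by (auto simp: generators_def)
  then show False
    using c_less by (metis fun_upd_same less_irrefl y_def)
qed

lemma diagonal_point_interior_generator:
  assumes \<sigma>: "\<sigma> \<in> injections d n" and supp: "supports_generator d n \<sigma> X"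
    and nonzero: "\<forall>i<n. \<forall>j<d. X i j \<noteq> 0"
  shows "diagonal_point d \<sigma> X \<in> interior_generators d n X"
proof -
  let ?x = "diagonal_point d \<sigma> X"
  have \<sigma>_range: "\<sigma> j < n" if "j < d" for j
    using \<sigma> that by (auto simp: injections_def)
  have x_apply: "?x j = X (\<sigma> j) j" if "j < d" for j
    using that by (simp add: diagonal_point_def)
  have x_region: "?x \<in> record_region d n X"
    using supp by (auto simp: record_region_def unit_cube_def strict_dom_def supports_generator_def diagonal_point_def)
  have "y = ?x" if y_region: "y \<in> record_region d n X" and below: "weak_dom d y ?x" for y
  proof (rule extensionalityI)
    show "y \<in> extensional {..<d}"
      using y_region by (auto simp: record_region_def unit_cube_def PiE_def)
    show "?x \<in> extensional {..<d}"
      by (simp add: diagonal_point_def)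
    fix j assume j: "j \<in> {..<d}"
    show "y j = ?x j"
    proof (rule ccontr)
      assume "y j \<noteq> ?x j"
      with below j have less: "y j < ?x j"
        by (auto simp: weak_dom_def)
      have "y k < X (\<sigma> j) k" if k: "k < d" for k
      proof (cases "k = j")
        case True
        then show ?thesis
          using less j by (simp add: x_apply)
      next
        case False
        have "y k \<le> X (\<sigma> k) k"
          using below k by (simp add: weak_dom_def x_apply)
        also have "\<dots> < X (\<sigma> j) k"
          using supp k j False by (auto simp: supports_generator_def)
        finally show ?thesis .
      qed
      then have "strict_dom d y (X (\<sigma> j))"
        by (simp add: strict_dom_def)
      then show False
        using y_region \<sigma>_range j by (auto simp: record_region_def)
    qed
  qed
  then have "?x \<in> generators d n X"
    using x_region by (auto simp: generators_def)
  then show ?thesis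
    using nonzero \<sigma>_range by (simp add: interior_generators_def x_apply)
qed

lemma interior_generator_diagonal_point:
  assumes x: "x \<in> interior_generators d n X"
  obtains \<sigma> where "\<sigma> \<in> injections d n" "supports_generator d n \<sigma> X" "x = diagonal_point d \<sigma> X"
proof -
  have x_gen: "x \<in> generators d n X" and x_nonzero: "\<forall>j<d. x j \<noteq> 0"
    using x by (auto simp: interior_generators_def)
  have x_region: "x \<in> record_region d n X"
    using x_gen by (simp add: generators_def)
  have x_cube: "x \<in> unit_cube d"
    using x_region by (simp add: record_region_def)
  obtain f where f: "\<And>j. j < d \<Longrightarrow> f j < n \<and> x j = X (f j) j \<and> (\<forall>k<d. k \<noteq> j \<longrightarrow> x k < X (f j) k)"
    using generator_coordinate_attained[OF x_gen] x_nonzero by metis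
  define \<sigma> where "\<sigma> = restrict f {..<d}"
  have \<sigma>_apply: "\<sigma> j = f j" if "j < d" for j
    using that by (simp add: \<sigma>_def)
  have x_apply: "X (\<sigma> j) j = x j" if "j < d" for j
    using f that by (simp add: \<sigma>_apply)
  have "inj_on \<sigma> {..<d}"
  proof (rule inj_onI)
    fix j j' assume j: "j \<in> {..<d}" and j': "j' \<in> {..<d}" and same: "\<sigma> j = \<sigma> j'"
    show "j = j'"
    proof (rule ccontr)
      assume "j \<noteq> j'"
      then have "x j' < X (\<sigma> j) j'"
        using f[of j] j j' by (auto simp: \<sigma>_apply)
      then show False
        using same x_apply[of j'] j' by simp
    qed
  qed
  then have "\<sigma> \<in> injections d n"
    using f by (auto simp: injections_def \<sigma>_def PiE_iff)
  moreover have "supports_generator d n \<sigma> X"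
    unfolding supports_generator_def
  proof (intro conjI allI impI)
    fix j assume j: "j < d"
    show "0 \<le> X (\<sigma> j) j" "X (\<sigma> j) j < 1"
      using x_cube j by (auto simp: x_apply unit_cube_def PiE_iff)
  next
    fix j k assume "j < d" "k < d" "k \<noteq> j"
    then show "X (\<sigma> k) k < X (\<sigma> j) k"
      using f[of j] x_apply[of k] by (simp add: \<sigma>_apply)
  next
    fix i assume "i < n"
    then show "\<not> (\<forall>k<d. X (\<sigma> k) k < X i k)"
      using x_region by (auto simp: record_region_def strict_dom_def x_apply)
  qed
  moreover have "x = diagonal_point d \<sigma> X"
  proof (rule extensionalityI)
    show "x \<in> extensional {..<d}"
      using x_cube by (auto simp: unit_cube_def PiE_def)
    show "diagonal_point d \<sigma> X \<in> extensional {..<d}"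
      by (simp add: diagonal_point_def)
  qed (simp add: diagonal_point_def x_apply)
  ultimately show ?thesis
    using that by blast
qed

lemma inj_on_diagonal_point:
  assumes distinct: "\<forall>i<n. \<forall>i'<n. \<forall>j<d. i \<noteq> i' \<longrightarrow> X i j \<noteq> X i' j"
  shows "inj_on (\<lambda>\<sigma>. diagonal_point d \<sigma> X) (injections d n)"
proof (rule inj_onI)
  fix \<sigma> \<tau> assume \<sigma>: "\<sigma> \<in> injections d n" and \<tau>: "\<tau> \<in> injections d n"
    and same: "diagonal_point d \<sigma> X = diagonal_point d \<tau> X"
  show "\<sigma> = \<tau>"
  proof (rule extensionalityI)
    show "\<sigma> \<in> extensional {..<d}" "\<tau> \<in> extensional {..<d}"
      using \<sigma> \<tau> by (auto simp: injections_def PiE_def)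
    fix j assume j: "j \<in> {..<d}"
    have "X (\<sigma> j) j = X (\<tau> j) j"
      using fun_cong[OF same, of j] j by (simp add: diagonal_point_def)
    moreover have "\<sigma> j < n" "\<tau> j < n"
      using \<sigma> \<tau> j by (auto simp: injections_def)
    ultimately show "\<sigma> j = \<tau> j"
      using distinct j by auto
  qed
qed

lemma card_interior_generators:
  assumes nonzero: "\<forall>i<n. \<forall>j<d. X i j \<noteq> 0"
    and distinct: "\<forall>i<n. \<forall>i'<n. \<forall>j<d. i \<noteq> i' \<longrightarrow> X i j \<noteq> X i' j"
  shows "card (interior_generators d n X) = card {\<sigma> \<in> injections d n. supports_generator d n \<sigma> X}"
proof -
  have "interior_generators d n X = (\<lambda>\<sigma>. diagonal_point d \<sigma> X) ` {\<sigma> \<in> injections d n. supports_generator d n \<sigma> X}"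
    using nonzero by (auto intro: diagonal_point_interior_generator elim: interior_generator_diagonal_point)
  moreover have "inj_on (\<lambda>\<sigma>. diagonal_point d \<sigma> X) {\<sigma> \<in> injections d n. supports_generator d n \<sigma> X}"
    using inj_on_diagonal_point[OF distinct] by (rule inj_on_subset) auto
  ultimately show ?thesis
    by (simp add: card_image)
qed

lemma AE_generic_observations:
  "AE X in obs_measure d n.
     (\<forall>i<n. \<forall>j<d. X i j \<noteq> 0) \<and> (\<forall>i<n. \<forall>i'<n. \<forall>j<d. i \<noteq> i' \<longrightarrow> X i j \<noteq> X i' j)"
proof -
  have coordinate: "AE y in PiM {..<d} (\<lambda>_. uniform01). y j \<noteq> c" if "j < d" for j c
    using that by (intro AE_PiM_component[where P="\<lambda>t. t \<noteq> c"] prob_space_uniform01 AE_uniform01_neq) auto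
  have nonzero: "AE X in obs_measure d n. X i j \<noteq> 0" if "i < n" "j < d" for i j
    unfolding obs_measure_def using that
    by (intro AE_PiM_component[where P="\<lambda>y. y j \<noteq> 0"] prob_space_PiM_uniform01 coordinate) auto
  have distinct: "AE X in obs_measure d n. i \<noteq> i' \<longrightarrow> X i j \<noteq> X i' j"
    if "i < n" "i' < n" "j < d" for i i' j
  proof (cases "i = i'")
    case False
    have "AE X in obs_measure d n. X i j \<noteq> X i' j"
      unfolding obs_measure_def using that False
      by (intro AE_PiM_components_neq[where f="\<lambda>y. y j"] prob_space_PiM_uniform01 coordinate
          borel_measurable_PiM_component[OF sets_uniform01]) auto
    then show ?thesis
      by (rule eventually_mono) simp
  qed simp
  have "AE X in obs_measure d n. \<forall>i\<in>{..<n}. \<forall>j\<in>{..<d}. X i j \<noteq> 0"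
    by (intro AE_finite_allI nonzero) auto
  moreover have "AE X in obs_measure d n. \<forall>i\<in>{..<n}. \<forall>i'\<in>{..<n}. \<forall>j\<in>{..<d}. i \<noteq> i' \<longrightarrow> X i j \<noteq> X i' j"
    by (intro AE_finite_allI distinct) auto
  ultimately show ?thesis
    by eventually_elim auto
qed

lemma AE_card_interior_generators:
  "AE X in obs_measure d n. of_nat (card (interior_generators d n X))
     = (\<Sum>\<sigma>\<in>injections d n. if supports_generator d n \<sigma> X then 1 else 0 :: ennreal)"
  using AE_generic_observations
proof (rule eventually_mono)
  fix X :: "nat \<Rightarrow> nat \<Rightarrow> real"
  assume "(\<forall>i<n. \<forall>j<d. X i j \<noteq> 0) \<and> (\<forall>i<n. \<forall>i'<n. \<forall>j<d. i \<noteq> i' \<longrightarrow> X i j \<noteq> X i' j)"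
  then have "card (interior_generators d n X) = card {\<sigma> \<in> injections d n. supports_generator d n \<sigma> X}"
    by (intro card_interior_generators) auto
  then show "of_nat (card (interior_generators d n X))
      = (\<Sum>\<sigma>\<in>injections d n. if supports_generator d n \<sigma> X then 1 else 0 :: ennreal)"
    by (simp add: sum.inter_filter[OF finite_injections, symmetric])
qed

section \<open>The contribution of a single injection\<close>

text \<open>The probability that none of \<open>m\<close> independent uniform points strictly dominates \<open>x\<close>.\<close>
definition undominated_prob :: "nat \<Rightarrow> nat \<Rightarrow> (nat \<Rightarrow> real) \<Rightarrow> ennreal" where
  "undominated_prob d m x =
     (if \<forall>k<d. 0 \<le> x k \<and> x k < 1 then ennreal (1 - (\<Prod>k<d. 1 - x k)) ^ m else 0)"

lemma borel_measurable_undominated_prob: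
  fixes M :: "real measure"
  assumes "sets M = sets borel"
  shows "undominated_prob d m \<in> borel_measurable (PiM J (\<lambda>_. M))"
  unfolding undominated_prob_def[abs_def]
  by (rule measurable_If[OF _ _ predE]; (intro pred_intros_logic pred_intros_countable pred_intros_imp'
      borel_measurable_pred_less pred_borel_le borel_measurable_PiM_component[OF assms]
      borel_measurable_const borel_measurable_power_ennreal measurable_compose[OF _ measurable_ennreal]
      borel_measurable_diff borel_measurable_prod)?)

lemma borel_measurable_supports_generator:
  "(\<lambda>X. if supports_generator d n \<sigma> X then 1 else 0 :: ennreal)
     \<in> borel_measurable (PiM I (\<lambda>_. PiM {..<d} (\<lambda>_. uniform01)))"
  unfolding supports_generator_def
  by (rule measurable_If[OF _ _ predE]; (intro pred_intros_logic pred_intros_countable pred_intros_imp'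
      borel_measurable_pred_less pred_borel_le borel_measurable_const
      borel_measurable_PiM_PiM_component[OF sets_uniform01])?)

text \<open>The non-domination condition is void for the observations selected by \<open>\<sigma>\<close>.\<close>
lemma supports_generator_iff:
  "supports_generator d n \<sigma> X \<longleftrightarrow>
     (\<forall>j<d. 0 \<le> X (\<sigma> j) j \<and> X (\<sigma> j) j < 1) \<and>
     (\<forall>j<d. \<forall>k<d. k \<noteq> j \<longrightarrow> X (\<sigma> k) k < X (\<sigma> j) k) \<and>
     (\<forall>i\<in>{..<n} - \<sigma> ` {..<d}. \<not> (\<forall>k<d. X (\<sigma> k) k < X i k))"
proof -
  have "\<not> (\<forall>k<d. X (\<sigma> k) k < X i k)" if "i \<in> \<sigma> ` {..<d}" for i
    using that by auto
  then show ?thesis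
    unfolding supports_generator_def by auto
qed

lemma nn_integral_supports_generator_selected:
  assumes \<sigma>: "\<sigma> \<in> injections d n"
  shows "(\<integral>\<^sup>+ X. (if supports_generator d n \<sigma> X then 1 else 0) \<partial>PiM {..<n} (\<lambda>_. PiM {..<d} (\<lambda>_. uniform01)))
    = (\<integral>\<^sup>+ W. (if \<forall>j<d. \<forall>k<d. k \<noteq> j \<longrightarrow> W k k < W j k
                then undominated_prob d (n - d) (\<lambda>j\<in>{..<d}. W j j) else 0)
        \<partial>PiM {..<d} (\<lambda>_. PiM {..<d} (\<lambda>_. uniform01)))"
    (is "_ = integral\<^sup>N _ ?h")
proof -
  let ?Md = "PiM {..<d} (\<lambda>_. uniform01)"
  interpret product_sigma_finite "\<lambda>_::nat. ?Md"
    by (rule product_sigma_finite_prob_space[OF prob_space_PiM_uniform01])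
  define A where "A = \<sigma> ` {..<d}"
  define B where "B = {..<n} - A"
  have \<sigma>_inj: "inj_on \<sigma> {..<d}" and A_sub: "A \<subseteq> {..<n}"
    using \<sigma> by (auto simp: injections_def A_def)
  have finite: "finite A" "finite B" and disjoint: "A \<inter> B = {}" and split: "{..<n} = A \<union> B"
    using A_sub by (auto simp: A_def B_def)
  have card_B: "card B = n - d"
    using A_sub \<sigma>_inj by (simp add: B_def A_def card_Diff_subset card_image)
  define F where "F a = (if \<forall>j<d. \<forall>k<d. k \<noteq> j \<longrightarrow> a (\<sigma> k) k < a (\<sigma> j) k
                          then undominated_prob d (n - d) (\<lambda>j\<in>{..<d}. a (\<sigma> j) j) else 0)" for a
  have "(\<integral>\<^sup>+ X. (if supports_generator d n \<sigma> X then 1 else 0) \<partial>PiM {..<n} (\<lambda>_. ?Md))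
      = (\<integral>\<^sup>+ a. (\<integral>\<^sup>+ b. (if supports_generator d n \<sigma> (merge A B (a, b)) then 1 else 0)
            \<partial>PiM B (\<lambda>_. ?Md)) \<partial>PiM A (\<lambda>_. ?Md))"
    unfolding split by (rule product_nn_integral_fold[OF disjoint finite borel_measurable_supports_generator])
  also have "\<dots> = (\<integral>\<^sup>+ a. F a \<partial>PiM A (\<lambda>_. ?Md))"
  proof (rule nn_integral_cong)
    fix a :: "nat \<Rightarrow> nat \<Rightarrow> real"
    let ?C = "(\<forall>j<d. 0 \<le> a (\<sigma> j) j \<and> a (\<sigma> j) j < 1) \<and> (\<forall>j<d. \<forall>k<d. k \<noteq> j \<longrightarrow> a (\<sigma> k) k < a (\<sigma> j) k)"
    have "supports_generator d n \<sigma> (merge A B (a, b)) \<longleftrightarrow> ?C \<and> (\<forall>i\<in>B. \<not> (\<forall>k<d. a (\<sigma> k) k < b i k))" for b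
    proof -
      have "merge A B (a, b) (\<sigma> k) = a (\<sigma> k)" if "k < d" for k
        using that disjoint by (simp add: A_def)
      moreover have "merge A B (a, b) i = b i" if "i \<in> B" for i
        using that disjoint by simp
      ultimately show ?thesis
        unfolding supports_generator_iff A_def[symmetric] B_def[symmetric] by auto
    qed
    then have "(\<integral>\<^sup>+ b. (if supports_generator d n \<sigma> (merge A B (a, b)) then 1 else 0) \<partial>PiM B (\<lambda>_. ?Md))
        = (if ?C then \<integral>\<^sup>+ b. (if \<forall>i\<in>B. \<not> (\<forall>k<d. a (\<sigma> k) k < b i k) then 1 else 0) \<partial>PiM B (\<lambda>_. ?Md) else 0)"
      by (cases ?C) auto
    also have "\<dots> = F a"
      using nn_integral_PiM_none_dominates[OF finite(2), of d "\<lambda>k. a (\<sigma> k) k"] card_B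
      by (auto simp: F_def undominated_prob_def)
    finally show "(\<integral>\<^sup>+ b. (if supports_generator d n \<sigma> (merge A B (a, b)) then 1 else 0) \<partial>PiM B (\<lambda>_. ?Md))
        = F a" .
  qed
  also have "\<dots> = integral\<^sup>N (PiM {..<d} (\<lambda>_. ?Md)) ?h"
  proof -
    have diagonal: "(\<lambda>W. \<lambda>j\<in>{..<d}. W j j) \<in> measurable (PiM {..<d} (\<lambda>_. ?Md)) ?Md"
      by (intro measurable_restrict measurable_PiM_PiM_component) auto
    have "?h \<in> borel_measurable (PiM {..<d} (\<lambda>_. ?Md))"
      by (rule measurable_If[OF _ _ predE]; (intro pred_intros_countable pred_intros_imp'
          borel_measurable_pred_less borel_measurable_PiM_PiM_component[OF sets_uniform01] borel_measurable_const
          measurable_compose[OF diagonal borel_measurable_undominated_prob[OF sets_uniform01]])?)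
    then have "integral\<^sup>N (PiM {..<d} (\<lambda>_. ?Md)) ?h = (\<integral>\<^sup>+ a. ?h (\<lambda>j\<in>{..<d}. a (\<sigma> j)) \<partial>PiM A (\<lambda>_. ?Md))"
      using \<sigma>_inj by (intro nn_integral_PiM_reindex prob_space_PiM_uniform01) (auto simp: A_def)
    also have "\<dots> = (\<integral>\<^sup>+ a. F a \<partial>PiM A (\<lambda>_. ?Md))"
    proof (intro nn_integral_cong)
      fix a :: "nat \<Rightarrow> nat \<Rightarrow> real"
      have "(\<lambda>j\<in>{..<d}. (\<lambda>j\<in>{..<d}. a (\<sigma> j)) j j) = (\<lambda>j\<in>{..<d}. a (\<sigma> j) j)"
        by (auto simp: fun_eq_iff)
      then show "?h (\<lambda>j\<in>{..<d}. a (\<sigma> j)) = F a"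
        by (auto simp: F_def)
    qed
    finally show ?thesis
      by simp
  qed
  finally show ?thesis .
qed

lemma prod_off_diagonal:
  fixes c :: "nat \<Rightarrow> 'a::comm_semiring_1"
  shows "(\<Prod>p\<in>{..<d} \<times> {..<d} - (\<lambda>j. (j, j)) ` {..<d}. c (snd p)) = (\<Prod>k<d. c k) ^ (d - 1)"
proof -
  have off_diagonal: "{..<d} \<times> {..<d} - (\<lambda>j. (j, j)) ` {..<d} = (\<lambda>(k, j). (j, k)) ` (SIGMA k:{..<d}. {..<d} - {k})"
    by (auto simp: image_iff)
  have "inj_on (\<lambda>(k, j). (j, k)) (SIGMA k:{..<d}. {..<d} - {k})"
    by (auto simp: inj_on_def)
  then have "(\<Prod>p\<in>{..<d} \<times> {..<d} - (\<lambda>j. (j, j)) ` {..<d}. c (snd p))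
      = (\<Prod>q\<in>(SIGMA k:{..<d}. {..<d} - {k}). c (fst q))"
    unfolding off_diagonal by (subst prod.reindex) (auto intro!: prod.cong)
  also have "\<dots> = (\<Prod>k<d. \<Prod>j\<in>{..<d} - {k}. c k)"
    by (subst prod.Sigma) (auto simp: case_prod_beta)
  also have "\<dots> = (\<Prod>k<d. c k ^ (d - 1))"
    by simp
  also have "\<dots> = (\<Prod>k<d. c k) ^ (d - 1)"
    by (simp add: prod_power_distrib)
  finally show ?thesis .
qed

lemma nn_integral_off_diagonal_exceeds:
  fixes d :: nat
  defines "R \<equiv> {..<d} \<times> {..<d} - (\<lambda>j. (j, j)) ` {..<d}"
  assumes x: "\<And>k. k < d \<Longrightarrow> 0 \<le> x k \<and> x k < 1"
  shows "(\<integral>\<^sup>+ v. (if \<forall>p\<in>R. x (snd p) < v p then c else 0) \<partial>PiM R (\<lambda>_. uniform01))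
       = c * (\<Prod>k<d. ennreal (1 - x k)) ^ (d - 1)"
proof -
  interpret product_sigma_finite "\<lambda>_::nat \<times> nat. uniform01"
    by (rule product_sigma_finite_prob_space[OF prob_space_uniform01])
  have "(\<integral>\<^sup>+ v. (if \<forall>p\<in>R. x (snd p) < v p then c else 0) \<partial>PiM R (\<lambda>_. uniform01))
      = (\<integral>\<^sup>+ v. (if \<forall>p\<in>R. v p \<in> {x (snd p)<..} then c else 0) \<partial>PiM R (\<lambda>_. uniform01))"
    by simp
  also have "\<dots> = c * (\<Prod>p\<in>R. emeasure uniform01 {x (snd p)<..})"
    by (intro nn_integral_PiM_all_in) (auto simp: R_def)
  also have "(\<Prod>p\<in>R. emeasure uniform01 {x (snd p)<..}) = (\<Prod>p\<in>R. ennreal (1 - x (snd p)))"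
    using x by (intro prod.cong refl emeasure_uniform01_greaterThan) (auto simp: R_def)
  also have "\<dots> = (\<Prod>k<d. ennreal (1 - x k)) ^ (d - 1)"
    unfolding R_def by (rule prod_off_diagonal)
  finally show ?thesis .
qed

text \<open>The off-diagonal entries are independent of the diagonal ones, and entry \<open>(j, k)\<close> exceeds
  \<open>W k k\<close> with probability \<open>1 - W k k\<close>.\<close>
lemma nn_integral_column_minima:
  fixes g :: "(nat \<Rightarrow> real) \<Rightarrow> ennreal"
  assumes g: "g \<in> borel_measurable (PiM {..<d} (\<lambda>_. uniform01))"
    and g_outside: "\<And>x. \<not> (\<forall>k<d. 0 \<le> x k \<and> x k < 1) \<Longrightarrow> g x = 0"
  shows "(\<integral>\<^sup>+ W. (if \<forall>j<d. \<forall>k<d. k \<noteq> j \<longrightarrow> W k k < W j k then g (\<lambda>j\<in>{..<d}. W j j) else 0)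
            \<partial>PiM {..<d} (\<lambda>_. PiM {..<d} (\<lambda>_. uniform01)))
       = (\<integral>\<^sup>+ x. g x * (\<Prod>k<d. ennreal (1 - x k)) ^ (d - 1) \<partial>PiM {..<d} (\<lambda>_. uniform01))"
proof -
  interpret product_sigma_finite "\<lambda>_::nat \<times> nat. uniform01"
    by (rule product_sigma_finite_prob_space[OF prob_space_uniform01])
  define D where "D = (\<lambda>j. (j, j)) ` {..<d}"
  define R where "R = {..<d} \<times> {..<d} - D"
  have finite: "finite D" "finite R" and disjoint: "D \<inter> R = {}" and square: "{..<d} \<times> {..<d} = D \<union> R"
    by (auto simp: D_def R_def)
  have R_iff: "p \<in> R \<longleftrightarrow> fst p < d \<and> snd p < d \<and> fst p \<noteq> snd p" for p
    by (cases p) (auto simp: R_def D_def)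
  define h where "h z = (if \<forall>j<d. \<forall>k<d. k \<noteq> j \<longrightarrow> z (k, k) < z (j, k) then g (\<lambda>j\<in>{..<d}. z (j, j)) else 0)"
    for z :: "nat \<times> nat \<Rightarrow> real"
  have diagonal: "(\<lambda>z. \<lambda>j\<in>{..<d}. z (j, j))
      \<in> measurable (PiM ({..<d} \<times> {..<d}) (\<lambda>_. uniform01)) (PiM {..<d} (\<lambda>_. uniform01))"
    by (intro measurable_restrict measurable_component_singleton) auto
  have h_meas: "h \<in> borel_measurable (PiM ({..<d} \<times> {..<d}) (\<lambda>_. uniform01))"
    unfolding h_def[abs_def]
    by (rule measurable_If[OF _ _ predE]; (intro pred_intros_countable pred_intros_imp' borel_measurable_pred_less
        borel_measurable_PiM_component[OF sets_uniform01] borel_measurable_const measurable_compose[OF diagonal g])?)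
  have "(\<integral>\<^sup>+ W. (if \<forall>j<d. \<forall>k<d. k \<noteq> j \<longrightarrow> W k k < W j k then g (\<lambda>j\<in>{..<d}. W j j) else 0)
            \<partial>PiM {..<d} (\<lambda>_. PiM {..<d} (\<lambda>_. uniform01)))
      = (\<integral>\<^sup>+ W. h (\<lambda>p\<in>{..<d} \<times> {..<d}. W (fst p) (snd p)) \<partial>PiM {..<d} (\<lambda>_. PiM {..<d} (\<lambda>_. uniform01)))"
    by (intro nn_integral_cong) (auto simp: h_def intro!: arg_cong[where f=g])
  also have "\<dots> = integral\<^sup>N (PiM ({..<d} \<times> {..<d}) (\<lambda>_. uniform01)) h"
    by (intro nn_integral_PiM_uncurry prob_space_uniform01 h_meas finite_lessThan)
  also have "\<dots> = (\<integral>\<^sup>+ u. (\<integral>\<^sup>+ v. h (merge D R (u, v)) \<partial>PiM R (\<lambda>_. uniform01)) \<partial>PiM D (\<lambda>_. uniform01))"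
    using product_nn_integral_fold[OF disjoint finite h_meas[unfolded square]] by (simp only: square)
  also have "\<dots> = (\<integral>\<^sup>+ u. g (\<lambda>j\<in>{..<d}. u (j, j)) * (\<Prod>k<d. ennreal (1 - u (k, k))) ^ (d - 1)
      \<partial>PiM D (\<lambda>_. uniform01))"
  proof (rule nn_integral_cong)
    fix u :: "nat \<times> nat \<Rightarrow> real"
    let ?x = "\<lambda>j\<in>{..<d}. u (j, j)"
    have "h (merge D R (u, v)) = (if \<forall>p\<in>R. u (snd p, snd p) < v p then g ?x else 0)" for v
    proof -
      have "merge D R (u, v) (k, k) = u (k, k)" if "k < d" for k
        using that by (simp add: merge_def D_def)
      moreover have "merge D R (u, v) p = v p" if "p \<in> R" for p
        using that disjoint by simp
      ultimately show ?thesis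
        by (auto simp: h_def Ball_def R_iff split_paired_All intro!: arg_cong[where f=g])
    qed
    moreover have "(\<integral>\<^sup>+ v. (if \<forall>p\<in>R. u (snd p, snd p) < v p then g ?x else 0) \<partial>PiM R (\<lambda>_. uniform01))
        = g ?x * (\<Prod>k<d. ennreal (1 - u (k, k))) ^ (d - 1)"
    proof (cases "\<forall>k<d. 0 \<le> ?x k \<and> ?x k < 1")
      case True
      then show ?thesis
        using nn_integral_off_diagonal_exceeds[of d "\<lambda>k. u (k, k)", folded D_def, folded R_def] by simp
    next
      case False
      then have "g ?x = 0"
        by (rule g_outside)
      then show ?thesis
        by (simp only: if_cancel) simp
    qed
    ultimately show "(\<integral>\<^sup>+ v. h (merge D R (u, v)) \<partial>PiM R (\<lambda>_. uniform01))
        = g ?x * (\<Prod>k<d. ennreal (1 - u (k, k))) ^ (d - 1)"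
      by simp
  qed
  also have "\<dots> = (\<integral>\<^sup>+ x. g x * (\<Prod>k<d. ennreal (1 - x k)) ^ (d - 1) \<partial>PiM {..<d} (\<lambda>_. uniform01))"
  proof -
    have "(\<lambda>x. g x * (\<Prod>k<d. ennreal (1 - x k)) ^ (d - 1)) \<in> borel_measurable (PiM {..<d} (\<lambda>_. uniform01))"
      by (intro borel_measurable_times_ennreal g borel_measurable_prod_complement_power sets_uniform01)
    then show ?thesis
      by (subst nn_integral_PiM_reindex[OF prob_space_uniform01, where f="\<lambda>j. (j, j)" and K=D])
        (auto simp: inj_on_def D_def intro!: nn_integral_cong)
  qed
  finally show ?thesis .
qed

lemma undominated_prob_mult_power:
  assumes x: "x \<in> unit_cube d"
  shows "undominated_prob d m x * (\<Prod>k<d. ennreal (1 - x k)) ^ (d - 1)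
       = ennreal ((\<Prod>k<d. 1 - x k) ^ (d - 1) * (1 - (\<Prod>k<d. 1 - x k)) ^ m)"
proof -
  have bounds: "0 \<le> 1 - x k \<and> 1 - x k \<le> 1" if "k \<in> {..<d}" for k
    using x that by (force simp: unit_cube_def PiE_iff)
  define P where "P = (\<Prod>k<d. 1 - x k)"
  have "0 \<le> P" "P \<le> 1"
    unfolding P_def using bounds by (auto intro: prod_nonneg prod_le_1)
  moreover have "(\<Prod>k<d. ennreal (1 - x k)) = ennreal P"
    unfolding P_def using bounds by (intro prod_ennreal) auto
  moreover have "undominated_prob d m x = ennreal ((1 - P) ^ m)"
    using x \<open>P \<le> 1\<close> by (auto simp: undominated_prob_def P_def unit_cube_def PiE_iff ennreal_power)
  ultimately show ?thesis
    by (simp add: P_def ennreal_power ennreal_mult[symmetric] mult.commute)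
qed

lemma nn_integral_supports_generator:
  assumes "\<sigma> \<in> injections d n"
  shows "(\<integral>\<^sup>+ X. (if supports_generator d n \<sigma> X then 1 else 0) \<partial>PiM {..<n} (\<lambda>_. PiM {..<d} (\<lambda>_. uniform01)))
    = (\<integral>\<^sup>+ x \<in> unit_cube d. ennreal ((\<Prod>j<d. 1 - x j) ^ (d - 1) * (1 - (\<Prod>j<d. 1 - x j)) ^ (n - d))
        \<partial>PiM {..<d} (\<lambda>_. lborel))"
proof -
  have weight_meas: "(\<lambda>x. undominated_prob d (n - d) x * (\<Prod>k<d. ennreal (1 - x k)) ^ (d - 1))
      \<in> borel_measurable (PiM {..<d} (\<lambda>_. M))" if "sets M = sets borel" for M :: "real measure"
    using that by (intro borel_measurable_times_ennreal borel_measurable_undominated_prob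
        borel_measurable_prod_complement_power)
  have "(\<integral>\<^sup>+ X. (if supports_generator d n \<sigma> X then 1 else 0) \<partial>PiM {..<n} (\<lambda>_. PiM {..<d} (\<lambda>_. uniform01)))
      = (\<integral>\<^sup>+ x. undominated_prob d (n - d) x * (\<Prod>k<d. ennreal (1 - x k)) ^ (d - 1)
          \<partial>PiM {..<d} (\<lambda>_. uniform01))"
    unfolding nn_integral_supports_generator_selected[OF assms]
    by (rule nn_integral_column_minima)
      (auto simp: undominated_prob_def intro: borel_measurable_undominated_prob sets_uniform01)
  also have "\<dots> = (\<integral>\<^sup>+ x \<in> unit_cube d. undominated_prob d (n - d) x * (\<Prod>k<d. ennreal (1 - x k)) ^ (d - 1)
      \<partial>PiM {..<d} (\<lambda>_. lborel))"
    unfolding unit_cube_def by (intro nn_integral_PiM_uniform01 weight_meas) auto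
  also have "\<dots> = (\<integral>\<^sup>+ x \<in> unit_cube d. ennreal ((\<Prod>j<d. 1 - x j) ^ (d - 1) * (1 - (\<Prod>j<d. 1 - x j)) ^ (n - d))
      \<partial>PiM {..<d} (\<lambda>_. lborel))"
    by (intro nn_integral_cong) (auto simp: undominated_prob_mult_power[simplified] split: split_indicator)
  finally show ?thesis .
qed

theorem lemmaL:
  fixes d n :: nat
  assumes "d \<ge> 1"
  shows "I_dn d n =
    ennreal (real (falling n d)) *
    (\<integral>\<^sup>+ x \<in> unit_cube d.
        ennreal ((\<Prod>j<d. 1 - x j) ^ (d - 1) * (1 - (\<Prod>j<d. 1 - x j)) ^ (n - d))
      \<partial>(PiM {..<d} (\<lambda>_. lborel)))"
    (is "_ = _ * ?J")
proof -
  have "I_dn d n = (\<integral>\<^sup>+ X. (\<Sum>\<sigma>\<in>injections d n. if supports_generator d n \<sigma> X then 1 else 0) \<partial>obs_measure d n)"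
    unfolding I_dn_def by (rule nn_integral_cong_AE[OF AE_card_interior_generators])
  also have "\<dots> = (\<Sum>\<sigma>\<in>injections d n. \<integral>\<^sup>+ X. (if supports_generator d n \<sigma> X then 1 else 0) \<partial>obs_measure d n)"
    unfolding obs_measure_def by (intro nn_integral_sum borel_measurable_supports_generator)
  also have "\<dots> = (\<Sum>\<sigma>\<in>injections d n. ?J)"
    unfolding obs_measure_def by (intro sum.cong refl nn_integral_supports_generator)
  also have "\<dots> = ennreal (real (falling n d)) * ?J"
    by (simp add: card_injections ennreal_of_nat_eq_real_of_nat)
  finally show ?thesis .
qed

end
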